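(* Suppose $a$ and $b$ are integers with $a\le p-1$ and $b\le q-1$, and $s$ is an element of $S$ (or of $R$) which is homogeneous modulo $\vec c$ of degree $a\vec x+b\vec y \bmod \vec c$ (i.e.\ all its monomials have degree congruent to $a\vec x+b\vec y$ in $L/\mathbb{Z}\vec c$). Then: (i) $s$ lies in the ideal $(x^a,y^{q-1+b})\cap(x^{p-1+a},y^b)$; (ii) if $a\le p-2$ then $s$ also lies in $(x^a,y^{q+b})$; (iii) if $b\le q-2$ then $s$ also lies in $(x^{p+a},y^b)$.
   Context: Let $p,q\ge2$ be integers and $W=x^py+xy^q$. Let $L$ be the abelian group generated by $\vec x,\vec y,\vec c$ modulo $p\vec x+\vec y=\vec x+q\vec y=\vec c$; let $S=\mathbb{C}[x,y]$ be $L$-graded with $\deg x=\vec x$, $\deg y=\vec y$, and $R=S/(W)$. *)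

theory Defs
  imports Complex_Main "HOL-Library.Poly_Mapping" "HOL-Library.Product_Plus"
begin

text \<open>S = C[x,y]: a polynomial is a finitely supported map from exponent pairs (i,j)
  (standing for the monomial x^i y^j) to complex coefficients.\<close>
type_synonym poly2 = "(nat \<times> nat) \<Rightarrow>\<^sub>0 complex"

definition X :: poly2 where "X = Poly_Mapping.single (1, 0) 1"
definition Y :: poly2 where "Y = Poly_Mapping.single (0, 1) 1"

text \<open>Powers with integer exponent; a non-positive exponent gives 1
  (the ideal then being the whole ring).\<close>
definition Xpow :: "int \<Rightarrow> poly2" where "Xpow a = X ^ nat a"
definition Ypow :: "int \<Rightarrow> poly2" where "Ypow b = Y ^ nat b"

definition ideal2 :: "poly2 \<Rightarrow> poly2 \<Rightarrow> poly2 set" where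
  "ideal2 g h = {f * g + k * h | f k. True}"

text \<open>The group L: elements u*x + v*y + w*c are written (u,v,w) in Z^3, modulo the
  subgroup generated by the relations p x + y - c and x + q y - c.
  Congruence in L / Z c: the difference lies in the subgroup generated by
  the relations together with c.\<close>
definition congr_mod_c :: "int \<Rightarrow> int \<Rightarrow> int \<times> int \<times> int \<Rightarrow> int \<times> int \<times> int \<Rightarrow> bool" where
  "congr_mod_c p q d e \<longleftrightarrow>
     (\<exists>m n l :: int. fst d - fst e = m * p + n
                   \<and> fst (snd d) - fst (snd e) = m + n * q
                   \<and> snd (snd d) - snd (snd e) = - m - n + l)"

definition mon_deg :: "nat \<times> nat \<Rightarrow> int \<times> int \<times> int" where
  "mon_deg ij = (int (fst ij), int (snd ij), 0)"

definition homog_mod_c :: "int \<Rightarrow> int \<Rightarrow> poly2 \<Rightarrow> int \<Rightarrow> int \<Rightarrow> bool" where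
  "homog_mod_c p q s a b \<longleftrightarrow>
     (\<forall>mn \<in> Poly_Mapping.keys s. congr_mod_c p q (mon_deg mn) (a, b, 0))"

end

theory Submission
  imports Defs
begin

text \<open>If x^i y^j occurs in s, then (u, v) = (i - a, j - b) lies in the lattice spanned by
  (p, 1) and (1, q), say u = m p + n and v = m + n q, so that v - q u = -m (p q - 1).
  On the box [1 - p, -1] \<times> [1 - q, q - 1] this value lies in [1, p q - 1], which forces
  m = -1 and then (u, v) = (1 - p, q - 1): the box meets the lattice only in that corner.
  The bounds a \<le> p - 1 and b \<le> q - 1 put every monomial of s that avoids one of the ideals
  into the box (or its mirror image under x \<leftrightarrow> y) but off the corner.\<close>

lemma single_zero_one: "Poly_Mapping.single (0, 0) 1 = (1 :: poly2)"
  by (simp add: single_one flip: zero_prod_def)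

lemma X_power: "X ^ n = Poly_Mapping.single (n, 0) 1"
  by (induct n) (simp_all add: X_def mult_single single_zero_one)

lemma Y_power: "Y ^ n = Poly_Mapping.single (0, n) 1"
  by (induct n) (simp_all add: Y_def mult_single single_zero_one)

lemma sum_single_lookup: "(\<Sum>k\<in>Poly_Mapping.keys s. Poly_Mapping.single k (Poly_Mapping.lookup s k)) = s"
proof (rule poly_mapping_eqI)
  fix i
  show "Poly_Mapping.lookup (\<Sum>k\<in>Poly_Mapping.keys s. Poly_Mapping.single k (Poly_Mapping.lookup s k)) i
      = Poly_Mapping.lookup s i"
    unfolding lookup_sum
    by (cases "i \<in> Poly_Mapping.keys s") (simp_all add: lookup_single when_def sum.delta in_keys_iff)
qed

lemma ideal2_zero: "0 \<in> ideal2 g h"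
  unfolding ideal2_def by (rule CollectI, rule exI[of _ 0], rule exI[of _ 0]) simp

lemma ideal2_add: "u \<in> ideal2 g h \<Longrightarrow> w \<in> ideal2 g h \<Longrightarrow> u + w \<in> ideal2 g h"
  unfolding ideal2_def by clarsimp (metis (no_types, lifting) add.assoc add.left_commute distrib_right)

lemma ideal2_sum: "(\<And>k. k \<in> K \<Longrightarrow> f k \<in> ideal2 g h) \<Longrightarrow> sum f K \<in> ideal2 g h"
  by (induct K rule: infinite_finite_induct) (simp_all add: ideal2_zero ideal2_add)

lemma single_in_ideal2_X_Y_power:
  assumes "A \<le> i \<or> B \<le> j"
  shows "Poly_Mapping.single (i, j) c \<in> ideal2 (X ^ A) (Y ^ B)"
proof (cases "A \<le> i")
  case True
  then have "Poly_Mapping.single (i, j) c = Poly_Mapping.single (i - A, j) c * X ^ A + 0 * Y ^ B"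
    by (simp add: X_power mult_single)
  then show ?thesis unfolding ideal2_def by blast
next
  case False
  with assms have "Poly_Mapping.single (i, j) c = 0 * X ^ A + Poly_Mapping.single (i, j - B) c * Y ^ B"
    by (simp add: Y_power mult_single)
  then show ?thesis unfolding ideal2_def by blast
qed

lemma in_ideal2_X_Y_power:
  assumes "\<And>i j. (i, j) \<in> Poly_Mapping.keys s \<Longrightarrow> A \<le> i \<or> B \<le> j"
  shows "s \<in> ideal2 (X ^ A) (Y ^ B)"
proof -
  have "(\<Sum>k\<in>Poly_Mapping.keys s. Poly_Mapping.single k (Poly_Mapping.lookup s k)) \<in> ideal2 (X ^ A) (Y ^ B)"
    using assms by (intro ideal2_sum) (auto intro: single_in_ideal2_X_Y_power)
  then show ?thesis by (simp add: sum_single_lookup)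
qed

lemma lattice_point_in_box_is_corner:
  fixes p q m n u v :: int
  assumes u: "u = m * p + n" and v: "v = m + n * q"
    and u_ge: "1 - p \<le> u" and u_le: "u \<le> -1" and "1 - q \<le> v" "v \<le> q - 1"
  shows "u = 1 - p \<and> v = q - 1"
proof -
  have "p \<ge> 2" "q \<ge> 1" using assms by linarith+
  then have d: "p * q - 1 > 0" by (smt (verit) mult_le_cancel_left1)
  have "q * u \<le> q * -1" "q * (1 - p) \<le> q * u"
    using mult_left_mono[OF u_le] mult_left_mono[OF u_ge] \<open>q \<ge> 1\<close> by simp_all
  moreover have "v - q * u = (- m) * (p * q - 1)"
    using u v by (simp add: algebra_simps)
  ultimately have pos: "0 < (- m) * (p * q - 1)" and le: "(- m) * (p * q - 1) \<le> 1 * (p * q - 1)"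
    using assms by (auto simp: algebra_simps)
  have "0 < - m" "- m \<le> 1"
    using zero_less_mult_pos2[OF pos d] mult_right_le_imp_le[OF le d] .
  then have "m = -1" by simp
  with u v have "u = n - p" "v = n * q - 1" by simp_all
  with assms have nq: "n * q \<le> 1 * q" and "1 \<le> n" by linarith+
  have "n \<le> 1" using mult_right_le_imp_le[OF nq] \<open>q \<ge> 1\<close> by simp
  with \<open>1 \<le> n\<close> have "n = 1" by simp
  with \<open>m = -1\<close> u v show ?thesis by simp
qed

lemma homog_mod_c_in_ideal2:
  assumes "homog_mod_c p q s a b"
    and "\<And>i j m n. int i - a = m * p + n \<Longrightarrow> int j - b = m + n * q
      \<Longrightarrow> int i < A \<Longrightarrow> int j < B \<Longrightarrow> False"
  shows "s \<in> ideal2 (Xpow A) (Ypow B)"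
  unfolding Xpow_def Ypow_def
proof (rule in_ideal2_X_Y_power)
  fix i j assume "(i, j) \<in> Poly_Mapping.keys s"
  then obtain m n where mn: "int i - a = m * p + n" "int j - b = m + n * q"
    using assms(1) unfolding homog_mod_c_def congr_mod_c_def mon_deg_def by fastforce
  show "nat A \<le> i \<or> nat B \<le> j"
  proof (rule ccontr)
    assume "\<not> (nat A \<le> i \<or> nat B \<le> j)"
    then have "int i < A" "int j < B" by linarith+
    with assms(2) mn show False by blast
  qed
qed

theorem lemma2p2:
  fixes p q a b :: int and s :: poly2
  assumes "p \<ge> 2" and "q \<ge> 2"
    and "a \<le> p - 1" and "b \<le> q - 1"
    and "homog_mod_c p q s a b"
  shows "s \<in> ideal2 (Xpow a) (Ypow (q - 1 + b)) \<inter> ideal2 (Xpow (p - 1 + a)) (Ypow b)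
         \<and> (a \<le> p - 2 \<longrightarrow> s \<in> ideal2 (Xpow a) (Ypow (q + b)))
         \<and> (b \<le> q - 2 \<longrightarrow> s \<in> ideal2 (Xpow (p + a)) (Ypow b))"
proof -
  have low_x: "int i - a = 1 - p \<and> int j - b = q - 1 \<or> q + b \<le> int j"
    if "int i - a = m * p + n" "int j - b = m + n * q" "int i < a" for i j m n
  proof (rule disjCI)
    assume "\<not> q + b \<le> int j"
    with that assms show "int i - a = 1 - p \<and> int j - b = q - 1"
      by (intro lattice_point_in_box_is_corner[OF that(1,2)]) linarith+
  qed
  have low_y: "int j - b = 1 - q \<and> int i - a = p - 1 \<or> p + a \<le> int i"
    if "int i - a = m * p + n" "int j - b = m + n * q" "int j < b" for i j m n
  proof (rule disjCI)
    have swapped: "int j - b = n * q + m" "int i - a = n + m * p"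
      using that(1,2) by linarith+
    assume "\<not> p + a \<le> int i"
    with that assms show "int j - b = 1 - q \<and> int i - a = p - 1"
      by (intro lattice_point_in_box_is_corner[OF swapped]) linarith+
  qed
  have "s \<in> ideal2 (Xpow a) (Ypow (q - 1 + b))"
    by (rule homog_mod_c_in_ideal2[OF assms(5)]) (drule (2) low_x, linarith)
  moreover have "s \<in> ideal2 (Xpow (p - 1 + a)) (Ypow b)"
    by (rule homog_mod_c_in_ideal2[OF assms(5)]) (drule (2) low_y, linarith)
  moreover have "s \<in> ideal2 (Xpow a) (Ypow (q + b))" if "a \<le> p - 2"
    by (rule homog_mod_c_in_ideal2[OF assms(5)]) (drule (2) low_x, use that in linarith)
  moreover have "s \<in> ideal2 (Xpow (p + a)) (Ypow b)" if "b \<le> q - 2"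
    by (rule homog_mod_c_in_ideal2[OF assms(5)]) (drule (2) low_y, use that in linarith)
  ultimately show ?thesis by blast
qed

end
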